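(* Let $n\ge3$, $k\ge0$ with $n\le k$. Let $S\subseteq\mathrm{Inc}(A,B)$ be an independent, non-reversible set in $G_n^k$ which contains a strict alternating cycle $\{(x_\alpha,y_\alpha):\alpha\in[3]\}$ satisfying the Disjoint Property with $x_1=a_1$ and $y_3=b_{k+2}$. If $A(S)\subseteq\{a_1,\dots,a_{k+2}\}$ and $B(S)\subseteq\{b_1,\dots,b_{k+2}\}$, then $|S|\le (k+1)(k+2)/2+2-n$.
   Context: For integers $n\ge3$, $k\ge0$, the crown $S_n^k$ is the poset with ground set $A\cup B$, $A=\{a_1,\dots,a_{n+k}\}$, $B=\{b_1,\dots,b_{n+k}\}$, indices cyclic modulo $n+k$; elements of $A$ are pairwise incomparable, as are elements of $B$, and $a_i$ is incomparable to $b_j$ when $j\in\{i,\dots,i+k\}$ (mod $n+k$), while $a_i<b_j$ otherwise. $\mathrm{Inc}(A,B)$ is the set of pairs $(a,b)\in A\times B$ with $a$ incomparable to $b$; $G_n^k$ has vertex set $\mathrm{Inc}(A,B)$ with $(a,b)$ adjacent to $(x,y)$ iff $a<y$ and $x<b$. A set $R\subseteq\mathrm{Inc}(A,B)$ is reversible if some linear extension $L$ of $S_n^k$ has $b<a$ in $L$ for all $(a,b)\in R$. $A(S)=\{a:\exists b,(a,b)\in S\}$, $B(S)=\{b:\exists a,(a,b)\in S\}$. An indexed set $\{(x_\alpha,y_\alpha):\alpha\in[m]\}\subseteq\mathrm{Inc}(A,B)$ is an alternating cycle if $x_\alpha\le y_{\alpha-1}$ for all $\alpha$ (cyclic indices);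 strict if $x_\alpha\le y_\beta$ iff $\beta=\alpha-1$. Circle conventions: points $u_1,\dots,u_{n+k}$ lie clockwise on a circle, with $a_i$ and $b_i$ both at $u_i$; a chain $p_1\,R_1\,p_2\cdots p_\ell$ with $R_j\in\{\prec,\preceq\}$ means travelling clockwise from the position of $p_1$ until first reaching the position of $p_\ell$ one meets the positions of $p_2,\dots,p_{\ell-1}$ in order, $\prec$ requiring distinct consecutive positions and $\preceq$ allowing equality. A strict alternating cycle of size $3$ satisfies the Disjoint Property if $x_1\preceq y_1\prec x_2\preceq y_2\prec x_3\preceq y_3$. *)

theory Defs
  imports Complex_Main
begin

text \<open>Elements of the crown S_n^k: CA i is a_i, CB j is b_j, indices 1..n+k.\<close>
datatype crown_el = CA nat | CB nat

definition crown_ground :: "nat \<Rightarrow> nat \<Rightarrow> crown_el set" where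
  "crown_ground n k = CA ` {1..n+k} \<union> CB ` {1..n+k}"

text \<open>a_i is incomparable to b_j iff j \<in> {i,...,i+k} (mod n+k).\<close>
definition cyc_inc :: "nat \<Rightarrow> nat \<Rightarrow> nat \<Rightarrow> nat \<Rightarrow> bool" where
  "cyc_inc n k i j \<longleftrightarrow> (int j - int i) mod int (n + k) \<le> int k"

definition crown_less :: "nat \<Rightarrow> nat \<Rightarrow> crown_el \<Rightarrow> crown_el \<Rightarrow> bool" where
  "crown_less n k p q \<longleftrightarrow> (\<exists>i j. p = CA i \<and> q = CB j \<and> i \<in> {1..n+k} \<and> j \<in> {1..n+k}
      \<and> \<not> cyc_inc n k i j)"

definition crown_le :: "nat \<Rightarrow> nat \<Rightarrow> crown_el \<Rightarrow> crown_el \<Rightarrow> bool" where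
  "crown_le n k p q \<longleftrightarrow> p = q \<or> crown_less n k p q"

definition Inc :: "nat \<Rightarrow> nat \<Rightarrow> (crown_el \<times> crown_el) set" where
  "Inc n k = {(CA i, CB j) | i j. i \<in> {1..n+k} \<and> j \<in> {1..n+k} \<and> cyc_inc n k i j}"

definition G_adj :: "nat \<Rightarrow> nat \<Rightarrow> crown_el \<times> crown_el \<Rightarrow> crown_el \<times> crown_el \<Rightarrow> bool" where
  "G_adj n k p q \<longleftrightarrow> crown_less n k (fst p) (snd q) \<and> crown_less n k (fst q) (snd p)"

definition G_independent :: "nat \<Rightarrow> nat \<Rightarrow> (crown_el \<times> crown_el) set \<Rightarrow> bool" where
  "G_independent n k S \<longleftrightarrow> S \<subseteq> Inc n k \<and> (\<forall>p\<in>S. \<forall>q\<in>S. \<not> G_adj n k p q)"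

definition linear_extension :: "nat \<Rightarrow> nat \<Rightarrow> (crown_el \<times> crown_el) set \<Rightarrow> bool" where
  "linear_extension n k L \<longleftrightarrow> L \<subseteq> crown_ground n k \<times> crown_ground n k
     \<and> strict_linear_order_on (crown_ground n k) L
     \<and> (\<forall>p q. crown_less n k p q \<longrightarrow> (p, q) \<in> L)"

definition reversible :: "nat \<Rightarrow> nat \<Rightarrow> (crown_el \<times> crown_el) set \<Rightarrow> bool" where
  "reversible n k R \<longleftrightarrow> R \<subseteq> Inc n k \<and>
     (\<exists>L. linear_extension n k L \<and> (\<forall>(a, b)\<in>R. (b, a) \<in> L))"

definition cprev :: "nat \<Rightarrow> nat \<Rightarrow> nat" where
  "cprev m \<alpha> = (if \<alpha> = 1 then m else \<alpha> - 1)"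

definition alt_cycle :: "nat \<Rightarrow> nat \<Rightarrow> nat \<Rightarrow> (nat \<Rightarrow> crown_el) \<Rightarrow> (nat \<Rightarrow> crown_el) \<Rightarrow> bool" where
  "alt_cycle n k m x y \<longleftrightarrow> (\<forall>\<alpha>\<in>{1..m}. (x \<alpha>, y \<alpha>) \<in> Inc n k)
     \<and> (\<forall>\<alpha>\<in>{1..m}. crown_le n k (x \<alpha>) (y (cprev m \<alpha>)))"

definition strict_alt_cycle :: "nat \<Rightarrow> nat \<Rightarrow> nat \<Rightarrow> (nat \<Rightarrow> crown_el) \<Rightarrow> (nat \<Rightarrow> crown_el) \<Rightarrow> bool" where
  "strict_alt_cycle n k m x y \<longleftrightarrow> alt_cycle n k m x y \<and>
     (\<forall>\<alpha>\<in>{1..m}. \<forall>\<beta>\<in>{1..m}. crown_le n k (x \<alpha>) (y \<beta>) \<longleftrightarrow> \<beta> = cprev m \<alpha>)"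

text \<open>Position on the circle (u_i for both a_i and b_i) and clockwise offset.\<close>
fun cpos :: "crown_el \<Rightarrow> nat" where
  "cpos (CA i) = i" | "cpos (CB i) = i"

definition cw_off :: "nat \<Rightarrow> nat \<Rightarrow> crown_el \<Rightarrow> crown_el \<Rightarrow> int" where
  "cw_off n k p q = (int (cpos q) - int (cpos p)) mod int (n + k)"

text \<open>Disjoint Property: x1 \<preceq> y1 \<prec> x2 \<preceq> y2 \<prec> x3 \<preceq> y3, read along the clockwise arc from x1 to y3.\<close>
definition disjoint_property :: "nat \<Rightarrow> nat \<Rightarrow> (nat \<Rightarrow> crown_el) \<Rightarrow> (nat \<Rightarrow> crown_el) \<Rightarrow> bool" where
  "disjoint_property n k x y \<longleftrightarrow>
     (let t = cw_off n k (x 1) in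
       0 \<le> t (y 1) \<and> t (y 1) < t (x 2) \<and> t (x 2) \<le> t (y 2) \<and> t (y 2) < t (x 3)
       \<and> t (x 3) \<le> t (y 3))"

end

theory Submission
  imports Defs
begin

text \<open>
Write the pairs of S as index pairs (i, j), all in the window 1..k+2. Independence forbids
(i, j) and (j+1, i') together unless a_i \<parallel> b_i'. The pairs with i \<noteq> 1 and j \<noteq> k+2 are
reflected injectively into the triangle 2 \<le> p \<le> q \<le> k+1, giving at most k(k+1)/2 of them.
The remaining pairs (1, j) and (i, k+2) are counted by j and i-1, two disjoint subsets of
1..k+1; the cycle provides a pair (1, j) and a pair (i, k+2) with j < i, and for the closest
such couple independence forces i - j \<ge> n, so at least n-2 values between them are unused.
\<close>

lemma cyc_inc_iff:
  assumes "i \<in> {1..n+k}" "j \<in> {1..n+k}"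
  shows "cyc_inc n k i j \<longleftrightarrow> (if i \<le> j then j - i \<le> k else n \<le> i - j)"
proof (cases "i \<le> j")
  case True
  then have "(int j - int i) mod int (n+k) = int j - int i"
    using assms by (intro mod_pos_pos_trivial) auto
  then show ?thesis using True unfolding cyc_inc_def by auto
next
  case False
  have "(int j - int i) mod int (n+k) = (int j - int i + int (n+k)) mod int (n+k)"
    by simp
  also have "\<dots> = int j - int i + int (n+k)"
    using assms False by (intro mod_pos_pos_trivial) auto
  finally show ?thesis using False unfolding cyc_inc_def by auto
qed

lemma card_triangle:
  "card {(p, q::nat). a \<le> p \<and> p \<le> q \<and> q < a + m} * 2 = m * (m + 1)"
proof (induction m)
  case 0
  have "{(p, q::nat). a \<le> p \<and> p \<le> q \<and> q < a + 0} = {}"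
    by auto
  then show ?case
    by (metis card.empty mult_0)
next
  case (Suc m)
  let ?T = "{(p, q::nat). a \<le> p \<and> p \<le> q \<and> q < a + m}"
  have split: "{(p, q::nat). a \<le> p \<and> p \<le> q \<and> q < a + Suc m} = ?T \<union> {a..a+m} \<times> {a+m}"
    by auto
  have "finite ?T"
    by (rule finite_subset[of _ "{a..a+m} \<times> {a..a+m}"]) auto
  moreover have "?T \<inter> {a..a+m} \<times> {a+m} = {}"
    by auto
  ultimately have "card (?T \<union> {a..a+m} \<times> {a+m}) = card ?T + (m + 1)"
    by (simp add: card_Un_disjoint card_cartesian_product)
  then show ?case
    using Suc.IH unfolding split by (simp add: algebra_simps)
qed

lemma card_disjoint_with_gap:
  fixes A B :: "nat set"
  assumes "A \<subseteq> {1..m}" "B \<subseteq> {1..m}" "A \<inter> B = {}"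
    and "a \<in> A" "b \<in> B" "a < b"
    and gap: "\<And>a b. a \<in> A \<Longrightarrow> b \<in> B \<Longrightarrow> a < b \<Longrightarrow> d \<le> b - a"
  shows "card A + card B + (d - 1) \<le> m"
proof -
  obtain a0 b0 where a0: "a0 \<in> A" and b0: "b0 \<in> B" and "a0 < b0"
    and closest: "\<And>a b. a \<in> A \<Longrightarrow> b \<in> B \<Longrightarrow> a < b \<Longrightarrow> b0 - a0 \<le> b - a"
    using ex_has_least_nat[of "\<lambda>(a, b). a \<in> A \<and> b \<in> B \<and> a < b" "(a, b)" "\<lambda>(a, b). b - a"]
      assms(4-6) by fastforce
  have unused: "{a0<..<b0} \<inter> (A \<union> B) = {}"
  proof -
    have False if "c \<in> A \<union> B" "a0 < c" "c < b0" for c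
      using that closest[of c b0] closest[of a0 c] a0 b0 by force
    then show ?thesis by fastforce
  qed
  have "b0 \<le> m"
    using b0 assms(2) by auto
  then have window: "{a0<..<b0} \<subseteq> {1..m}"
    by auto
  have "card A + card B = card (A \<union> B)"
    using assms(1-3) by (simp add: card_Un_disjoint finite_subset)
  also have "\<dots> \<le> card ({1..m} - {a0<..<b0})"
    using assms(1,2) unused by (intro card_mono) auto
  also have "\<dots> = m - (b0 - Suc a0)"
    using window by (simp add: card_Diff_subset)
  finally show ?thesis
    using gap[OF a0 b0 \<open>a0 < b0\<close>] \<open>b0 \<le> m\<close> \<open>a0 < b0\<close> by linarith
qed

locale independent_window =
  fixes n k :: nat and P :: "(nat \<times> nat) set"
  assumes two_le_n: "2 \<le> n"
    and P_range: "P \<subseteq> {1..k+2} \<times> {1..k+2}"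
    and P_inc: "(i, j) \<in> P \<Longrightarrow> cyc_inc n k i j"
    and P_indep: "(i, j) \<in> P \<Longrightarrow> (i', j') \<in> P \<Longrightarrow> cyc_inc n k i j' \<or> cyc_inc n k i' j"
begin

lemma P_memD: "(i, j) \<in> P \<Longrightarrow> i \<in> {1..k+2} \<and> j \<in> {1..k+2}"
  using P_range by blast

lemma finite_P: "finite P"
  using P_range by (rule finite_subset) simp

lemma inc_iff:
  assumes "i \<in> {1..k+2}" "j \<in> {1..k+2}"
  shows "cyc_inc n k i j \<longleftrightarrow> (if i \<le> j then j - i \<le> k else n \<le> i - j)"
  using cyc_inc_iff[of i n k j] assms two_le_n by auto

lemma not_inc_1_top: "\<not> cyc_inc n k 1 (k+2)"
  using inc_iff[of 1 "k+2"] by simp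

lemma not_inc_Suc: "j \<in> {1..k+1} \<Longrightarrow> \<not> cyc_inc n k (Suc j) j"
  using inc_iff[of "Suc j" j] two_le_n by simp

lemma Suc_pair_inc:
  assumes "(i, j) \<in> P" "(Suc j, j') \<in> P"
  shows "cyc_inc n k i j'"
  using P_indep[OF assms] not_inc_Suc[of j] P_memD[OF assms(1)] P_memD[OF assms(2)] by auto

lemma card_split:
  "card P = card {j. (1, j) \<in> P} + card {i. (i, k+2) \<in> P} + card {(i, j) \<in> P. i \<noteq> 1 \<and> j \<noteq> k+2}"
proof -
  let ?A = "{1::nat} \<times> {j. (1, j) \<in> P}" and ?B = "{i. (i, k+2) \<in> P} \<times> {k+2}"
    and ?C = "{(i, j) \<in> P. i \<noteq> 1 \<and> j \<noteq> k+2}"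
  have A: "finite ?A"
    by (rule rev_finite_subset[OF finite_P]) force
  have B: "finite ?B"
    by (rule rev_finite_subset[OF finite_P]) force
  have C: "finite ?C"
    by (rule rev_finite_subset[OF finite_P]) force
  have "?A \<inter> ?B = {}"
    using P_inc not_inc_1_top by auto
  then have AB: "card (?A \<union> ?B) = card ?A + card ?B"
    by (rule card_Un_disjoint[OF A B])
  have "(?A \<union> ?B) \<inter> ?C = {}"
    by auto
  then have ABC: "card (?A \<union> ?B \<union> ?C) = card (?A \<union> ?B) + card ?C"
    by (rule card_Un_disjoint[OF finite_UnI[OF A B] C])
  have "card P = card (?A \<union> ?B \<union> ?C)"
    by (rule arg_cong[where f = card]) auto
  moreover have "card ?A = card {j. (1, j) \<in> P}" "card ?B = card {i. (i, k+2) \<in> P}"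
    by (simp_all add: card_cartesian_product)
  ultimately show ?thesis
    using AB ABC by linarith
qed

lemma card_inner:
  "2 * card {(i, j) \<in> P. i \<noteq> 1 \<and> j \<noteq> k+2} \<le> k * (k + 1)"
proof -
  let ?C = "{(i, j) \<in> P. i \<noteq> 1 \<and> j \<noteq> k+2}"
    and ?T = "{(p, q::nat). 2 \<le> p \<and> p \<le> q \<and> q < 2 + k}"
  define reflect where "reflect = (\<lambda>(i, j). if j < i then (Suc j, i - 1) else (i, j))"
  have reflect_into: "reflect ` ?C \<subseteq> ?T"
  proof
    fix z assume "z \<in> reflect ` ?C"
    then obtain i j where ij: "(i, j) \<in> P" "i \<noteq> 1" "j \<noteq> k+2" and z: "z = reflect (i, j)"
      by blast
    have "reflect (i, j) \<in> ?T"
    proof (cases "j < i")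
      case True
      then have "n \<le> i - j"
        using P_inc[OF ij(1)] inc_iff P_memD[OF ij(1)] by auto
      then show ?thesis
        using True two_le_n P_memD[OF ij(1)] by (auto simp: reflect_def)
    qed (use ij P_memD[OF ij(1)] in \<open>auto simp: reflect_def\<close>)
    then show "z \<in> ?T"
      using z by simp
  qed
  have no_mixed: False if "(i, j) \<in> P" "(Suc j, i - 1) \<in> P" "j < i" for i j
  proof -
    have "i - 1 \<in> {1..k+1}"
      using that(3) P_memD[OF that(1)] by auto
    then have "\<not> cyc_inc n k i (i - 1)"
      using not_inc_Suc[of "i - 1"] that(3) by (simp add: Suc_diff_1)
    then show False
      using Suc_pair_inc[OF that(1,2)] by blast
  qed
  have "inj_on reflect ?C"
  proof (rule inj_onI)
    fix u v assume "u \<in> ?C" "v \<in> ?C" and eq: "reflect u = reflect v"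
    then obtain i j i' j' where u: "u = (i, j)" "(i, j) \<in> P" and v: "v = (i', j')" "(i', j') \<in> P"
      by auto
    have "i \<ge> 1" "i' \<ge> 1"
      using P_memD[OF u(2)] P_memD[OF v(2)] by auto
    then show "u = v"
      using eq no_mixed[OF u(2)] no_mixed[OF v(2)] u v unfolding reflect_def
      by (auto split: if_splits)
  qed
  then have "card ?C \<le> card ?T"
    using reflect_into by (rule card_inj_on_le)
      (rule finite_subset[of _ "{..<2+k} \<times> {..<2+k}"], auto)
  then show ?thesis
    using card_triangle[of 2 k] by simp
qed

lemma card_border:
  assumes "(1, a) \<in> P" "(b, k+2) \<in> P" "a < b"
  shows "card {j. (1, j) \<in> P} + card {i. (i, k+2) \<in> P} + n \<le> k + 3"
proof -
  define A where "A = {j. (1, j) \<in> P}"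
  define B where "B = {i. (i, k+2) \<in> P}"
  have A_range: "A \<subseteq> {1..k+1}"
  proof
    fix j assume "j \<in> A"
    then have "(1, j) \<in> P" by (simp add: A_def)
    then show "j \<in> {1..k+1}"
      using P_memD P_inc not_inc_1_top by (cases "j = k+2") fastforce+
  qed
  have B_range: "B \<subseteq> {2..k+2}"
  proof
    fix i assume "i \<in> B"
    then have "(i, k+2) \<in> P" by (simp add: B_def)
    then show "i \<in> {2..k+2}"
      using P_memD P_inc not_inc_1_top by (cases "i = 1") fastforce+
  qed
  have inj: "inj_on (\<lambda>i. i - 1) B"
    using B_range by (intro inj_onI) force
  have disjoint: "A \<inter> (\<lambda>i. i - 1) ` B = {}"
  proof -
    have False if "j \<in> A" "Suc j \<in> B" for j
      using Suc_pair_inc[of 1 j "k+2"] not_inc_1_top that unfolding A_def B_def by blast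
    then show ?thesis
      using B_range by (fastforce simp: Suc_diff_1)
  qed
  have gap: "n - 1 \<le> i' - j"
    if j: "j \<in> A" and i': "i' \<in> (\<lambda>i. i - 1) ` B" and "j < i'" for i' j
  proof -
    obtain i where "i \<in> B" "i' = i - 1"
      using i' by blast
    then have "cyc_inc n k i j"
      using P_indep[of 1 j i "k+2"] not_inc_1_top j unfolding A_def B_def by blast
    moreover have "i \<in> {1..k+2}" "j \<in> {1..k+2}"
      using A_range B_range \<open>i \<in> B\<close> j by auto
    ultimately have "n \<le> i - j"
      using inc_iff \<open>i' = i - 1\<close> \<open>j < i'\<close> by (auto split: if_splits)
    then show ?thesis
      using \<open>i' = i - 1\<close> by simp
  qed
  have a_in: "a \<in> A" and b_in: "b - 1 \<in> (\<lambda>i. i - 1) ` B"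
    using assms unfolding A_def B_def by auto
  then have "a < b - 1"
    using disjoint assms(3) by (cases "a = b - 1") auto
  moreover have "(\<lambda>i. i - 1) ` B \<subseteq> {1..k+1}"
    using B_range by force
  ultimately have "card A + card ((\<lambda>i. i - 1) ` B) + (n - 1 - 1) \<le> k + 1"
    using card_disjoint_with_gap[OF A_range _ disjoint a_in b_in _ gap] by blast
  then show ?thesis
    using card_image[OF inj] two_le_n unfolding A_def B_def by simp
qed

theorem card_bound:
  assumes "(1, a) \<in> P" "(b, k+2) \<in> P" "a < b"
  shows "2 * card P + 2 * n \<le> (k + 1) * (k + 2) + 4"
  using card_split card_inner card_border[OF assms] by (simp add: algebra_simps)

end

definition index_pairs :: "(crown_el \<times> crown_el) set \<Rightarrow> (nat \<times> nat) set" where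
  "index_pairs S = {(i, j). (CA i, CB j) \<in> S}"

lemma card_index_pairs:
  assumes "S \<subseteq> Inc n k"
  shows "card (index_pairs S) = card S"
proof -
  have "S = (\<lambda>(i, j). (CA i, CB j)) ` index_pairs S"
    using assms unfolding index_pairs_def Inc_def by fastforce
  moreover have "inj_on (\<lambda>(i, j). (CA i, CB j)) (index_pairs S)"
    by (auto simp: inj_on_def)
  ultimately show ?thesis
    by (metis card_image)
qed

lemma crown_less_CA_CB_iff:
  "i \<in> {1..n+k} \<Longrightarrow> j \<in> {1..n+k} \<Longrightarrow> crown_less n k (CA i) (CB j) \<longleftrightarrow> \<not> cyc_inc n k i j"
  by (auto simp: crown_less_def)

lemma independent_window_index_pairs:
  assumes "2 \<le> n" "G_independent n k S"
    and "fst ` S \<subseteq> CA ` {1..k+2}" "snd ` S \<subseteq> CB ` {1..k+2}"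
  shows "independent_window n k (index_pairs S)"
proof
  show range: "index_pairs S \<subseteq> {1..k+2} \<times> {1..k+2}"
    using assms(3,4) unfolding index_pairs_def by force
  show "cyc_inc n k i j" if "(i, j) \<in> index_pairs S" for i j
    using that assms(2) unfolding index_pairs_def G_independent_def Inc_def by auto
  show "cyc_inc n k i j' \<or> cyc_inc n k i' j"
    if "(i, j) \<in> index_pairs S" "(i', j') \<in> index_pairs S" for i j i' j'
  proof -
    have "\<not> G_adj n k (CA i, CB j) (CA i', CB j')"
      using that assms(2) unfolding index_pairs_def G_independent_def by blast
    moreover have "{i, j, i', j'} \<subseteq> {1..n+k}"
      using that range assms(1) by force
    ultimately show ?thesis
      unfolding G_adj_def by (auto simp: crown_less_CA_CB_iff)
  qed
qed (use assms(1) in simp)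

lemma disjoint_property_pos_less:
  assumes "disjoint_property n k x y" "x 1 = CA 1"
    and "cpos (y 1) \<in> {1..n+k}" "cpos (x 3) \<in> {1..n+k}"
  shows "cpos (y 1) < cpos (x 3)"
proof -
  have off: "cw_off n k (CA 1) p = int (cpos p) - 1" if "cpos p \<in> {1..n+k}" for p
  proof -
    have "(int (cpos p) - 1) mod int (n + k) = int (cpos p) - 1"
      using that by (intro mod_pos_pos_trivial) auto
    then show ?thesis
      by (simp add: cw_off_def)
  qed
  have "cw_off n k (x 1) (y 1) < cw_off n k (x 1) (x 3)"
    using assms(1) unfolding disjoint_property_def Let_def by linarith
  then show ?thesis
    using off[OF assms(3)] off[OF assms(4)] assms(2) by simp
qed

theorem lemma6p7:
  fixes n k :: nat and S :: "(crown_el \<times> crown_el) set" and x y :: "nat \<Rightarrow> crown_el"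
  assumes "n \<ge> 3" and "n \<le> k"
    and "G_independent n k S" and "\<not> reversible n k S"
    and "strict_alt_cycle n k 3 x y" and "(\<lambda>\<alpha>. (x \<alpha>, y \<alpha>)) ` {1..3} \<subseteq> S"
    and "disjoint_property n k x y"
    and "x 1 = CA 1" and "y 3 = CB (k + 2)"
    and "fst ` S \<subseteq> CA ` {1..k+2}" and "snd ` S \<subseteq> CB ` {1..k+2}"
  shows "real (card S) \<le> (real k + 1) * (real k + 2) / 2 + 2 - real n"
proof -
  interpret independent_window n k "index_pairs S"
    using independent_window_index_pairs assms(1,3,10,11) by simp
  have first: "(x 1, y 1) \<in> S" and last: "(x 3, y 3) \<in> S"
    using assms(6) by auto
  obtain j1 where j1: "y 1 = CB j1" "j1 \<in> {1..k+2}"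
    using first assms(11) by force
  obtain i3 where i3: "x 3 = CA i3" "i3 \<in> {1..k+2}"
    using last assms(10) by force
  have "j1 < i3"
    using disjoint_property_pos_less[OF assms(7,8)] j1 i3 assms(1) by simp
  moreover have "(1, j1) \<in> index_pairs S" "(i3, k+2) \<in> index_pairs S"
    using first last j1 i3 assms(8,9) by (simp_all add: index_pairs_def)
  ultimately have "2 * card (index_pairs S) + 2 * n \<le> (k + 1) * (k + 2) + 4"
    using card_bound by blast
  then have "2 * card S + 2 * n \<le> (k + 1) * (k + 2) + 4"
    using card_index_pairs[of S n k] assms(3) by (simp add: G_independent_def)
  then have "real (2 * card S + 2 * n) \<le> real ((k + 1) * (k + 2) + 4)"
    by (simp only: of_nat_le_iff)
  then show ?thesis
    by (simp add: field_simps)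
qed

end
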